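(* Let $n,r\ge1$, $\lambda\in\Lambda_\vartriangle(n,r)$ and $d\in\mathscr D^\vartriangle_\lambda$. Let $$Y=\{(s,t)\in\mathbb Z^2\mid 1\le d^{-1}(s)\le r,\ s<t,\ s,t\in R^\lambda_k\text{ for some }k\in\mathbb Z\},$$ $$Z=\{(s,t)\in\mathbb Z^2\mid 1\le s\le r,\ s<t,\ s,t\in R^\lambda_k\text{ for some }1\le k\le n\}.$$ Then $|Y|=|Z|=\ell(w_{0,\lambda})$, where $w_{0,\lambda}$ is the longest element of $\mathfrak S_\lambda$.
   Context: The affine symmetric group $\mathfrak S_{\vartriangle,r}$ is the group (under composition) of bijections $w:\mathbb Z\to\mathbb Z$ with $w(i+r)=w(i)+r$. It contains $s_i$ ($1\le i\le r$): $s_i(j)=j$ if $j\not\equiv i,i+1\pmod r$, $s_i(j)=j-1$ if $j\equiv i+1$, $s_i(j)=j+1$ if $j\equiv i$; and $\rho:j\mapsto j+1$. The $s_i$ generate a Coxeter group $W$ with length $\ell$; every element is uniquely $\rho^aw'$ ($w'\in W$) and $\ell(\rho^aw')=\ell(w')$. $\Lambda_\vartriangle(n,r)$ is the set of $\lambda=(\lambda_i)_{i\in\mathbb Z}$ with $\lambda_i\in\mathbb N$, $\lambda_{i+n}=\lambda_i$, $\lambda_1+\dots+\lambda_n=r$. For $1\le i\le n$, $k\in\mathbb Z$ put $\lambda_{k,i-1}=kr+\sum_{t=1}^{i-1}\lambda_t$ and $R^\lambda_{i+kn}=\{\lambda_{k,i-1}+1,\dots,\lambda_{k,i-1}+\lambda_i\}$.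 $\mathfrak S_\lambda$ is the Young subgroup $\mathfrak S_{(\lambda_1,\dots,\lambda_n)}$ of $\mathfrak S_r$ (periodically extended), and $\mathscr D^\vartriangle_\lambda=\{d\mid \ell(wd)=\ell(w)+\ell(d)\ \forall w\in\mathfrak S_\lambda\}$. *)

theory Defs
  imports Main
begin

definition aff_sym :: "nat \<Rightarrow> (int \<Rightarrow> int) set" where
  "aff_sym r = {w. bij w \<and> (\<forall>i. w (i + int r) = w i + int r)}"

definition sref :: "nat \<Rightarrow> nat \<Rightarrow> int \<Rightarrow> int" where
  "sref r i j = (if j mod int r = (int i + 1) mod int r then j - 1
                 else if j mod int r = int i mod int r then j + 1 else j)"

definition rho_pow :: "int \<Rightarrow> int \<Rightarrow> int" where
  "rho_pow a = (\<lambda>j. j + a)"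

text \<open>Length: every element is rho^a w' with w' in the Coxeter group W generated by
  the s_i, and the length is the Coxeter length of w' (least number of generators).\<close>
definition aff_len :: "nat \<Rightarrow> (int \<Rightarrow> int) \<Rightarrow> nat" where
  "aff_len r w = (LEAST k. \<exists>a is. length is = k \<and> set is \<subseteq> {1..r} \<and>
        w = rho_pow a \<circ> foldr (\<circ>) (map (sref r) is) id)"

definition lam_off :: "(int \<Rightarrow> nat) \<Rightarrow> nat \<Rightarrow> int \<Rightarrow> int \<Rightarrow> int" where
  "lam_off lam r k i = k * int r + (\<Sum>t\<in>{1..i-1}. int (lam t))"

definition Rblock :: "(int \<Rightarrow> nat) \<Rightarrow> nat \<Rightarrow> nat \<Rightarrow> int \<Rightarrow> int set" where
  "Rblock lam n r m =
     (let i = (m - 1) mod int n + 1; k = (m - 1) div int n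
      in {lam_off lam r k i + 1 .. lam_off lam r k i + int (lam i)})"

definition Lam_aff :: "nat \<Rightarrow> nat \<Rightarrow> (int \<Rightarrow> nat) set" where
  "Lam_aff n r = {lam. (\<forall>i. lam (i + int n) = lam i) \<and> (\<Sum>i\<in>{1..int n}. lam i) = r}"

text \<open>Young subgroup S_lambda of S_r, periodically extended: the elements of the
  affine symmetric group stabilising every block R^lambda_k (1 <= k <= n).\<close>
definition young_sub :: "(int \<Rightarrow> nat) \<Rightarrow> nat \<Rightarrow> nat \<Rightarrow> (int \<Rightarrow> int) set" where
  "young_sub lam n r = {w \<in> aff_sym r. \<forall>k\<in>{1..int n}. w ` Rblock lam n r k = Rblock lam n r k}"

definition dist_reps :: "(int \<Rightarrow> nat) \<Rightarrow> nat \<Rightarrow> nat \<Rightarrow> (int \<Rightarrow> int) set" where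
  "dist_reps lam n r = {d \<in> aff_sym r. \<forall>w \<in> young_sub lam n r.
        aff_len r (w \<circ> d) = aff_len r w + aff_len r d}"

definition longest_young :: "(int \<Rightarrow> nat) \<Rightarrow> nat \<Rightarrow> nat \<Rightarrow> int \<Rightarrow> int" where
  "longest_young lam n r = (SOME w. w \<in> young_sub lam n r \<and>
        (\<forall>v \<in> young_sub lam n r. aff_len r v \<le> aff_len r w))"

end

theory Submission
  imports Defs
begin

text \<open>
  Inversions give the length on the Young subgroup.  A simple reflection changes the
  inversion set of a periodic permutation on [1, r] by at most one pair, so the number of
  inversions is a lower bound for the length.  Conversely an element of the Young subgroup
  has all its inversions inside blocks, and sorting it by adjacent transpositions inside
  the blocks writes it as a word of exactly that many simple reflections.  Hence
  \<open>\<ell>(w) \<le> |Z|\<close> on the Young subgroup, with equality for the element reversing every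
  block, so the longest element has length |Z|.

  For Y: the number of pairs (s, t) starting at s depends only on s modulo r, and a
  periodic bijection d maps [1, r] to a full set of residues modulo r.
\<close>

lemma int_eq_0_if_abs_mult_less:
  fixes c m :: int
  assumes "0 < m" "\<bar>c * m\<bar> < m"
  shows "c = 0"
proof (rule ccontr)
  assume "c \<noteq> 0"
  then have "1 * m \<le> \<bar>c\<bar> * m" using assms(1) by (intro mult_right_mono) auto
  then show False using assms by (simp add: abs_mult)
qed

lemma mod_plus_1_range: "0 < m \<Longrightarrow> (x - 1) mod m + 1 \<in> {1..m::int}"
  using pos_mod_sign[of m "x - 1"] pos_mod_bound[of m "x - 1"] unfolding atLeastAtMost_iff by linarith

lemma add_self_minus_1_div_mod:
  fixes x m :: int
  assumes "m \<noteq> 0"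
  shows "(x + m - 1) div m = (x - 1) div m + 1" and "(x + m - 1) mod m = (x - 1) mod m"
proof -
  have shift: "x + m - 1 = (x - 1) + m" by simp
  show "(x + m - 1) div m = (x - 1) div m + 1" unfolding shift using assms by (rule div_add_self2)
  show "(x + m - 1) mod m = (x - 1) mod m" unfolding shift by simp
qed

lemma int_decomp_range:
  fixes m x :: int
  assumes "0 < m"
  obtains i c where "i \<in> {1..m}" "x = i + c * m"
proof
  show "(x - 1) mod m + 1 \<in> {1..m}" using assms by (rule mod_plus_1_range)
  show "x = (x - 1) mod m + 1 + (x - 1) div m * m"
    using div_mult_mod_eq[of "x - 1" m] by linarith
qed

lemma periodic_add_mult:
  fixes f :: "int \<Rightarrow> 'a" and m :: int
  assumes "\<And>x. f (x + m) = f x"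
  shows "f (x + c * m) = f x"
proof (induction c rule: int_induct[where k = 0])
  case (step1 c)
  have "f (x + (c + 1) * m) = f (x + c * m + m)" by (simp add: algebra_simps)
  with step1 assms show ?case by simp
next
  case (step2 c)
  have "f (x + c * m) = f (x + (c - 1) * m + m)" by (simp add: algebra_simps)
  with step2 assms show ?case by simp
qed simp

lemma int_increasing_steps:
  fixes f :: "int \<Rightarrow> int"
  assumes "\<And>z. a \<le> z \<Longrightarrow> z < b \<Longrightarrow> f z < f (z + 1)" "a \<le> x" "x \<le> y" "y \<le> b"
  shows "f x + (y - x) \<le> f y"
  using assms(3,4)
proof (induction y rule: int_ge_induct)
  case (step y)
  then have "f x + (y - x) \<le> f y" "f y < f (y + 1)" using assms(1,2) by auto
  then show ?case by simp
qed simp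

lemma involution_image_eq:
  assumes "\<And>x. f (f x) = x" "f ` A \<subseteq> A"
  shows "f ` A = A"
  using assms by (metis image_eqI subsetI subset_antisym image_subset_iff)

lemma bij_inv_mem_iff: "bij f \<Longrightarrow> inv f y \<in> A \<longleftrightarrow> y \<in> f ` A"
  by (metis bij_inv_eq_iff image_iff)

definition shift_equivariant :: "nat \<Rightarrow> (int \<Rightarrow> int) \<Rightarrow> bool" where
  "shift_equivariant r u \<longleftrightarrow> (\<forall>x. u (x + int r) = u x + int r)"

lemma aff_sym_iff: "w \<in> aff_sym r \<longleftrightarrow> bij w \<and> shift_equivariant r w"
  unfolding aff_sym_def shift_equivariant_def by simp

lemma shift_equivariant_id: "shift_equivariant r id"
  unfolding shift_equivariant_def by simp

lemma shift_equivariant_comp: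
  "shift_equivariant r u \<Longrightarrow> shift_equivariant r v \<Longrightarrow> shift_equivariant r (u \<circ> v)"
  unfolding shift_equivariant_def by simp

lemma shift_equivariant_add_mult:
  assumes "shift_equivariant r u"
  shows "u (x + c * int r) = u x + c * int r"
  using periodic_add_mult[of "\<lambda>x. u x - x" "int r" x c] assms
  by (simp add: shift_equivariant_def)

lemma shift_equivariant_eqI:
  assumes "r \<ge> 1" "shift_equivariant r u" "shift_equivariant r v"
    and "\<And>x. x \<in> {1..int r} \<Longrightarrow> u x = v x"
  shows "u = v"
proof
  fix x
  obtain i c where "i \<in> {1..int r}" "x = i + c * int r"
    using int_decomp_range[of "int r" x] assms(1) by auto
  then show "u x = v x" using assms(2-4) shift_equivariant_add_mult by metis
qed

lemma aff_sym_id: "id \<in> aff_sym r"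
  by (simp add: aff_sym_iff shift_equivariant_id)

lemma aff_sym_comp: "u \<in> aff_sym r \<Longrightarrow> v \<in> aff_sym r \<Longrightarrow> u \<circ> v \<in> aff_sym r"
  by (simp add: aff_sym_iff shift_equivariant_comp bij_comp)

lemma aff_sym_eq_if_mod_eq:
  assumes "u \<in> aff_sym r" "p \<in> {1..int r}" "q \<in> {1..int r}" "u p mod int r = u q mod int r"
  shows "p = q"
proof -
  obtain c where "u p - u q = int r * c"
    using assms(4) by (metis mod_eq_dvd_iff dvdE)
  then have "u p = u (q + c * int r)"
    using shift_equivariant_add_mult assms(1) by (simp add: aff_sym_iff algebra_simps)
  then have "p = q + c * int r"
    using assms(1) by (auto simp: aff_sym_iff dest: bij_is_inj injD)
  then have "c = 0"
    using int_eq_0_if_abs_mult_less[of "int r" c] assms(2,3) by auto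
  with \<open>p = q + c * int r\<close> show ?thesis by simp
qed

lemma eq_if_mod_eq_range:
  "p \<in> {1..int r} \<Longrightarrow> q \<in> {1..int r} \<Longrightarrow> p mod int r = q mod int r \<Longrightarrow> p = q"
  using aff_sym_eq_if_mod_eq[OF aff_sym_id] by simp

lemma sum_aff_sym_image:
  fixes f :: "int \<Rightarrow> 'a::comm_monoid_add"
  assumes "r \<ge> 1" "u \<in> aff_sym r" "\<And>x. f (x + int r) = f x"
  shows "(\<Sum>s\<in>u ` {1..int r}. f s) = (\<Sum>s\<in>{1..int r}. f s)"
proof -
  define h where "h p = (u p - 1) mod int r + 1" for p
  have h_range: "h ` {1..int r} \<subseteq> {1..int r}"
    unfolding h_def using assms(1) mod_plus_1_range by auto
  have f_h: "f (u p) = f (h p)" for p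
  proof -
    have "u p = h p + (u p - 1) div int r * int r"
      unfolding h_def using div_mult_mod_eq[of "u p - 1" "int r"] by linarith
    then show ?thesis using periodic_add_mult[of f "int r", OF assms(3)] by metis
  qed
  have "inj_on h {1..int r}"
  proof (rule inj_onI)
    fix p q assume "p \<in> {1..int r}" "q \<in> {1..int r}" "h p = h q"
    moreover have "u p mod int r = u q mod int r"
      using \<open>h p = h q\<close> unfolding h_def by (simp add: mod_eq_dvd_iff)
    ultimately show "p = q" using aff_sym_eq_if_mod_eq[OF assms(2)] by blast
  qed
  then have h_bij: "h ` {1..int r} = {1..int r}"
    using h_range by (intro endo_inj_surj) auto
  have "inj u" using assms(2) by (simp add: aff_sym_iff bij_is_inj)
  then have "(\<Sum>s\<in>u ` {1..int r}. f s) = (\<Sum>p\<in>{1..int r}. f (u p))"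
    by (simp add: sum.reindex inj_on_subset)
  also have "\<dots> = (\<Sum>p\<in>{1..int r}. f (h p))" by (simp add: f_h)
  also have "\<dots> = (\<Sum>s\<in>h ` {1..int r}. f s)"
    using \<open>inj_on h {1..int r}\<close> by (simp add: sum.reindex)
  finally show ?thesis unfolding h_bij .
qed

lemma shift_equivariant_sref: "shift_equivariant r (sref r i)"
  unfolding shift_equivariant_def sref_def by simp

lemma sref_sref:
  assumes "r \<ge> 2"
  shows "sref r i (sref r i j) = j"
proof -
  have "\<not> (int r dvd (j - int i) \<and> int r dvd (j - int i - 1))"
  proof
    assume "int r dvd (j - int i) \<and> int r dvd (j - int i - 1)"
    then have "int r dvd 1" using dvd_diff[of "int r" "j - int i" "j - int i - 1"] by simp
    then show False using assms by simp
  qed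
  then show ?thesis unfolding sref_def by (auto simp: mod_eq_dvd_iff algebra_simps)
qed

lemma aff_sym_sref:
  assumes "r \<ge> 1"
  shows "sref r i \<in> aff_sym r"
proof -
  have "bij (sref r i)"
  proof (cases "r = 1")
    case True
    then have "sref r i = (\<lambda>j. j - 1)" unfolding sref_def by (simp add: fun_eq_iff)
    then show ?thesis by (simp add: o_bij[where g = "\<lambda>j. j + 1"] fun_eq_iff)
  next
    case False
    with assms show ?thesis by (intro involuntory_imp_bij sref_sref) simp
  qed
  then show ?thesis by (simp add: aff_sym_iff shift_equivariant_sref)
qed

lemma sref_on_range:
  assumes "1 \<le> p" "p + 1 \<le> int r" "y \<in> {1..int r}"
  shows "sref r (nat p) y = (if y = p + 1 then p else if y = p then p + 1 else y)"
proof -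
  have "int (nat p) = p" using assms(1) by simp
  moreover have "y mod int r = (p + 1) mod int r \<longleftrightarrow> y = p + 1"
    and "y mod int r = p mod int r \<longleftrightarrow> y = p"
    using eq_if_mod_eq_range[OF assms(3)] assms(1,2) by auto
  ultimately show ?thesis unfolding sref_def by auto
qed

abbreviation sref_word :: "nat \<Rightarrow> nat list \<Rightarrow> int \<Rightarrow> int" where
  "sref_word r is \<equiv> foldr (\<circ>) (map (sref r) is) id"

lemma sref_word_snoc: "sref_word r (is @ [i]) = sref_word r is \<circ> sref r i"
proof -
  have "foldr (\<circ>) fs g = foldr (\<circ>) fs id \<circ> g" for fs and g :: "int \<Rightarrow> int"
    by (induction fs) (auto simp: fun_eq_iff)
  from this[of "map (sref r) is" "sref r i"] show ?thesis by simp
qed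

lemma aff_sym_sref_word: "r \<ge> 1 \<Longrightarrow> sref_word r is \<in> aff_sym r"
  by (induction "is") (simp_all add: aff_sym_id aff_sym_comp aff_sym_sref)

definition inversions :: "nat \<Rightarrow> (int \<Rightarrow> int) \<Rightarrow> (int \<times> int) set" where
  "inversions r w = {(a, b). 1 \<le> a \<and> a < b \<and> b \<le> int r \<and> w b < w a}"

lemma inversions_subset: "inversions r w \<subseteq> {1..int r} \<times> {1..int r}"
  unfolding inversions_def by auto

lemma finite_inversions: "finite (inversions r w)"
  using inversions_subset by (rule finite_subset) simp

lemma inversions_rho_pow: "inversions r (rho_pow a \<circ> w) = inversions r w"
  unfolding inversions_def rho_pow_def by simp

text \<open>A new inversion (p, q) of s_i \<circ> u needs u p \<equiv> i and u q \<equiv> i + 1 (mod r),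
  which pins down p and q.\<close>
lemma card_inversions_sref_comp:
  assumes "u \<in> aff_sym r"
  shows "card (inversions r (sref r i \<circ> u)) \<le> card (inversions r u) + 1"
proof -
  define D where "D = inversions r (sref r i \<circ> u) - inversions r u"
  have residues: "u p mod int r = int i mod int r \<and> u q mod int r = (int i + 1) mod int r"
    if "(p, q) \<in> D" for p q
  proof -
    have "p < q" "sref r i (u q) < sref r i (u p)" "\<not> u q < u p"
      using that unfolding D_def inversions_def by auto
    moreover have "u p \<noteq> u q"
      using \<open>p < q\<close> assms by (auto simp: aff_sym_iff dest: bij_is_inj injD)
    ultimately show ?thesis unfolding sref_def by (auto split: if_splits)
  qed
  have "finite D" unfolding D_def using finite_inversions by blast
  have "x = y" if "x \<in> D" "y \<in> D" for x y
  proof -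
    obtain p q p' q' where xy: "x = (p, q)" "y = (p', q')" by fastforce
    have range: "p \<in> {1..int r}" "q \<in> {1..int r}" "p' \<in> {1..int r}" "q' \<in> {1..int r}"
      using that inversions_subset unfolding xy D_def by blast+
    have "p = p'" by (rule aff_sym_eq_if_mod_eq[OF assms range(1,3)]) (use residues that xy in auto)
    moreover have "q = q'" by (rule aff_sym_eq_if_mod_eq[OF assms range(2,4)]) (use residues that xy in auto)
    ultimately show ?thesis using xy by simp
  qed
  then have "card D \<le> 1" using card_le_Suc0_iff_eq[OF \<open>finite D\<close>] by auto
  have "card (inversions r (sref r i \<circ> u)) \<le> card (inversions r u \<union> D)"
    by (rule card_mono) (auto simp: D_def finite_inversions)
  also have "\<dots> \<le> card (inversions r u) + card D" by (rule card_Un_le)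
  finally show ?thesis using \<open>card D \<le> 1\<close> by simp
qed

lemma card_inversions_sref_word: "r \<ge> 1 \<Longrightarrow> card (inversions r (sref_word r is)) \<le> length is"
proof (induction "is")
  case Nil
  have "inversions r (\<lambda>x. x) = {}" by (auto simp: inversions_def)
  then show ?case by simp
next
  case (Cons i "is")
  have "card (inversions r (sref_word r (i # is))) = card (inversions r (sref r i \<circ> sref_word r is))"
    by simp
  also have "\<dots> \<le> card (inversions r (sref_word r is)) + 1"
    by (rule card_inversions_sref_comp[OF aff_sym_sref_word[OF Cons.prems]])
  also have "\<dots> \<le> length (i # is)"
    using Cons.IH[OF Cons.prems] by (simp only: length_Cons)
  finally show ?case .
qed

lemma rho_pow_0_comp [simp]: "rho_pow 0 \<circ> f = f"
  by (simp add: rho_pow_def fun_eq_iff)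

lemma card_inversions_le_aff_len:
  assumes "r \<ge> 1" "set is \<subseteq> {1..r}"
  shows "card (inversions r (rho_pow a \<circ> sref_word r is))
    \<le> aff_len r (rho_pow a \<circ> sref_word r is)" (is "_ \<le> aff_len r ?w")
proof -
  let ?word = "\<lambda>k. \<exists>a is. length is = k \<and> set is \<subseteq> {1..r} \<and> ?w = rho_pow a \<circ> sref_word r is"
  have "?word (aff_len r ?w)"
    unfolding aff_len_def by (rule LeastI[of ?word]) (use assms(2) in blast)
  then obtain a' is' where len: "length is' = aff_len r ?w"
    and w: "?w = rho_pow a' \<circ> sref_word r is'" by blast
  have "card (inversions r ?w) = card (inversions r (sref_word r is'))"
    unfolding w inversions_rho_pow ..
  also have "\<dots> \<le> length is'" using card_inversions_sref_word[OF assms(1)] .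
  finally show ?thesis unfolding len .
qed

lemma aff_len_le_length:
  "set is \<subseteq> {1..r} \<Longrightarrow> aff_len r (rho_pow a \<circ> sref_word r is) \<le> length is"
  unfolding aff_len_def by (rule Least_le) blast

text \<open>On [1, r], s_p swaps p and p + 1, so the pair map \<open>(a, b) \<mapsto> (s_p a, s_p b)\<close> carries the
  inversions of w other than (p, p + 1) bijectively onto those of w \<circ> s_p.\<close>
lemma card_inversions_comp_sref:
  assumes p: "1 \<le> p" "p + 1 \<le> int r" and descent: "w (p + 1) < w p"
  shows "card (inversions r (w \<circ> sref r (nat p))) + 1 = card (inversions r w)"
proof -
  define \<sigma> where "\<sigma> = sref r (nat p)"
  have \<sigma>\<sigma>: "\<sigma> (\<sigma> y) = y" for y unfolding \<sigma>_def using p by (intro sref_sref) simp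
  have \<sigma>_range: "\<sigma> y = (if y = p + 1 then p else if y = p then p + 1 else y)"
    if "y \<in> {1..int r}" for y
    unfolding \<sigma>_def using sref_on_range[OF p that] .
  have \<sigma>_maps: "\<sigma> y \<in> {1..int r}" if "y \<in> {1..int r}" for y
    using \<sigma>_range[OF that] that p by auto
  have inv_pp: "(p, p + 1) \<in> inversions r w" using p descent unfolding inversions_def by auto
  have mem: "(a, b) \<in> inversions r (w \<circ> \<sigma>) \<longleftrightarrow> (\<sigma> a, \<sigma> b) \<in> inversions r w - {(p, p + 1)}"
    if "a \<in> {1..int r}" "b \<in> {1..int r}" for a b
    using that \<sigma>_maps[OF that(1)] \<sigma>_maps[OF that(2)] descent
    by (auto simp: inversions_def \<sigma>_range[OF that(1)] \<sigma>_range[OF that(2)])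
  have "inversions r (w \<circ> \<sigma>) = map_prod \<sigma> \<sigma> ` (inversions r w - {(p, p + 1)})"
  proof (intro set_eqI iffI)
    fix x assume x: "x \<in> inversions r (w \<circ> \<sigma>)"
    obtain a b where ab: "x = (a, b)" by fastforce
    then have "a \<in> {1..int r}" "b \<in> {1..int r}" using x inversions_subset by blast+
    then have "(\<sigma> a, \<sigma> b) \<in> inversions r w - {(p, p + 1)}" using mem x ab by blast
    moreover have "x = map_prod \<sigma> \<sigma> (\<sigma> a, \<sigma> b)" using ab \<sigma>\<sigma> by simp
    ultimately show "x \<in> map_prod \<sigma> \<sigma> ` (inversions r w - {(p, p + 1)})" by blast
  next
    fix x assume "x \<in> map_prod \<sigma> \<sigma> ` (inversions r w - {(p, p + 1)})"
    then obtain c d where x: "x = (\<sigma> c, \<sigma> d)" and cd: "(c, d) \<in> inversions r w - {(p, p + 1)}"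
      by auto
    then have "c \<in> {1..int r}" "d \<in> {1..int r}" using inversions_subset by blast+
    then show "x \<in> inversions r (w \<circ> \<sigma>)"
      using mem[OF \<sigma>_maps \<sigma>_maps] cd unfolding x \<sigma>\<sigma> by blast
  qed
  moreover have "inj \<sigma>" using \<sigma>\<sigma> by (metis injI)
  ultimately have "card (inversions r (w \<circ> \<sigma>)) = card (inversions r w - {(p, p + 1)})"
    using card_image[OF inj_on_subset[OF prod.inj_map[OF \<open>inj \<sigma>\<close> \<open>inj \<sigma>\<close>] subset_UNIV]]
    by simp
  also have "\<dots> = card (inversions r w) - 1" using inv_pp by (rule card_Diff_singleton)
  moreover have "card (inversions r w) > 0"
    using inv_pp finite_inversions card_gt_0_iff by blast
  ultimately show ?thesis unfolding \<sigma>_def by linarith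
qed

definition psum :: "(int \<Rightarrow> nat) \<Rightarrow> int \<Rightarrow> int" where
  "psum lam j = (\<Sum>t\<in>{1..j}. int (lam t))"

lemma psum_step: "1 \<le> k \<Longrightarrow> psum lam k = psum lam (k - 1) + int (lam k)"
proof -
  assume "1 \<le> k"
  then have "{1..k} = insert k {1..k - 1}" by auto
  then show ?thesis unfolding psum_def by simp
qed

lemma psum_mono: "j \<le> j' \<Longrightarrow> psum lam j \<le> psum lam j'"
  unfolding psum_def by (rule sum_mono2) auto

lemma psum_nonneg: "0 \<le> psum lam j"
  unfolding psum_def by (simp add: sum_nonneg)

locale composition =
  fixes n r :: nat and lam :: "int \<Rightarrow> nat"
  assumes n_pos: "n \<ge> 1" and r_pos: "r \<ge> 1" and lam_in: "lam \<in> Lam_aff n r"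
begin

abbreviation Rb :: "int \<Rightarrow> int set" where
  "Rb \<equiv> Rblock lam n r"

lemma psum_n: "psum lam (int n) = int r"
proof -
  have "(\<Sum>i\<in>{1..int n}. lam i) = r" using lam_in unfolding Lam_aff_def by auto
  then show ?thesis unfolding psum_def by (metis of_nat_sum)
qed

lemma psum_le_r: "j \<le> int n \<Longrightarrow> psum lam j \<le> int r"
  using psum_mono[of j "int n" lam] psum_n by simp

lemma Rblock_eq: "k \<in> {1..int n} \<Longrightarrow> Rb k = {psum lam (k - 1) + 1 .. psum lam k}"
  unfolding Rblock_def Let_def lam_off_def psum_def[symmetric]
  using psum_step[of k lam] by simp

lemma Rblock_subset: "k \<in> {1..int n} \<Longrightarrow> Rb k \<subseteq> {1..int r}"
  using Rblock_eq psum_nonneg[of lam "k - 1"] psum_le_r[of k] by auto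

lemma Rblock_less:
  assumes "k \<in> {1..int n}" "k' \<in> {1..int n}" "k < k'" "p \<in> Rb k" "q \<in> Rb k'"
  shows "p < q"
  using psum_mono[of k "k' - 1" lam] assms Rblock_eq[OF assms(1)] Rblock_eq[OF assms(2)] by auto

lemma Rblock_unique:
  assumes "k \<in> {1..int n}" "k' \<in> {1..int n}" "p \<in> Rb k" "p \<in> Rb k'"
  shows "k = k'"
  using Rblock_less[OF assms(1,2) _ assms(3,4)] Rblock_less[OF assms(2,1) _ assms(4,3)]
  by (cases k k' rule: linorder_cases) auto

lemma Rblock_cover:
  assumes "p \<in> {1..int r}"
  obtains k where "k \<in> {1..int n}" "p \<in> Rb k"
proof -
  define k where "k = (LEAST k::nat. p \<le> psum lam (int k))"
  have ex: "p \<le> psum lam (int n)" using assms psum_n by simp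
  then have pk: "p \<le> psum lam (int k)" unfolding k_def by (rule LeastI)
  have kn: "k \<le> n" unfolding k_def using ex by (rule Least_le)
  have "k \<noteq> 0"
  proof
    assume "k = 0"
    then show False using pk assms by (simp add: psum_def)
  qed
  then have "k - 1 < k" by simp
  then have "\<not> p \<le> psum lam (int (k - 1))" unfolding k_def by (rule not_less_Least)
  then have "p \<in> Rb (int k)" using Rblock_eq[of "int k"] \<open>k \<noteq> 0\<close> kn pk by (auto simp: of_nat_diff)
  then show ?thesis using that[of "int k"] \<open>k \<noteq> 0\<close> kn by simp
qed

lemma Rblock_shift: "x + int r \<in> Rb (m + int n) \<longleftrightarrow> x \<in> Rb m"
proof -
  have n: "int n \<noteq> 0" using n_pos by simp
  show ?thesis unfolding Rblock_def Let_def lam_off_def add_self_minus_1_div_mod[OF n]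
    by (auto simp: algebra_simps)
qed

lemma Rblock_shift_mult: "x + c * int r \<in> Rb (m + c * int n) \<longleftrightarrow> x \<in> Rb m"
proof (induction c rule: int_induct[where k = 0])
  case (step1 c)
  then show ?case using Rblock_shift[of "x + c * int r" "m + c * int n"]
    by (simp add: algebra_simps)
next
  case (step2 c)
  then show ?case using Rblock_shift[of "x + (c - 1) * int r" "m + (c - 1) * int n"]
    by (simp add: algebra_simps)
qed simp

lemma Rblock_translate:
  obtains i c where "i \<in> {1..int n}" "m = i + c * int n"
    and "\<And>x. x \<in> Rb m \<longleftrightarrow> x - c * int r \<in> Rb i"
proof -
  obtain i c where i: "i \<in> {1..int n}" "m = i + c * int n"
    using int_decomp_range[of "int n" m] n_pos by auto
  moreover have "x \<in> Rb m \<longleftrightarrow> x - c * int r \<in> Rb i" for x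
    using Rblock_shift_mult[of "x - c * int r" c i] i(2) by simp
  ultimately show ?thesis using that by blast
qed

lemma Rblock_width:
  assumes "s \<in> Rb m" "t \<in> Rb m"
  shows "t - s < int r"
proof -
  obtain i c where i: "i \<in> {1..int n}" and "\<And>x. x \<in> Rb m \<longleftrightarrow> x - c * int r \<in> Rb i"
    using Rblock_translate[of m] by blast
  then have "s - c * int r \<in> {1..int r}" "t - c * int r \<in> {1..int r}"
    using assms Rblock_subset[OF i] by blast+
  then show ?thesis by simp
qed

lemma Rblock_index_range:
  assumes "s \<in> {1..int r}" "s \<in> Rb m"
  shows "m \<in> {1..int n}"
proof -
  obtain i c where i: "i \<in> {1..int n}" "m = i + c * int n"
    and "\<And>x. x \<in> Rb m \<longleftrightarrow> x - c * int r \<in> Rb i"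
    using Rblock_translate[of m] by blast
  then have "s - c * int r \<in> Rb i" using assms(2) by blast
  then have "s - c * int r \<in> {1..int r}" using Rblock_subset[OF i(1)] by blast
  then have "\<bar>c * int r\<bar> < int r"
    using assms(1) unfolding abs_less_iff atLeastAtMost_iff by linarith
  with r_pos have "c = 0" by (intro int_eq_0_if_abs_mult_less[of "int r"]) simp_all
  then show ?thesis using i by simp
qed

definition block_succ :: "int \<Rightarrow> int set" where
  "block_succ s = {t. s < t \<and> (\<exists>k. s \<in> Rb k \<and> t \<in> Rb k)}"

definition block_pairs :: "(int \<times> int) set" where
  "block_pairs = {(s, t). 1 \<le> s \<and> s \<le> int r \<and> s < t \<and> (\<exists>k\<in>{1..int n}. s \<in> Rb k \<and> t \<in> Rb k)}"

lemma finite_block_succ: "finite (block_succ s)"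
proof (rule finite_subset)
  show "block_succ s \<subseteq> {s + 1 .. s + int r}"
    unfolding block_succ_def using Rblock_width by fastforce
qed simp

lemma block_succ_shift: "t \<in> block_succ (s + int r) \<longleftrightarrow> t - int r \<in> block_succ s"
proof -
  have "(\<exists>k. s + int r \<in> Rb k \<and> t \<in> Rb k) \<longleftrightarrow> (\<exists>k. s \<in> Rb k \<and> t - int r \<in> Rb k)"
  proof
    assume "\<exists>k. s + int r \<in> Rb k \<and> t \<in> Rb k"
    then obtain k where
      "s + int r \<in> Rb (k - int n + int n)" "t - int r + int r \<in> Rb (k - int n + int n)"
      by auto
    then show "\<exists>k. s \<in> Rb k \<and> t - int r \<in> Rb k" unfolding Rblock_shift by blast
  next
    assume "\<exists>k. s \<in> Rb k \<and> t - int r \<in> Rb k"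
    then obtain k where "s + int r \<in> Rb (k + int n)" "t - int r + int r \<in> Rb (k + int n)"
      unfolding Rblock_shift by blast
    then show "\<exists>k. s + int r \<in> Rb k \<and> t \<in> Rb k" by auto
  qed
  then show ?thesis unfolding block_succ_def by auto
qed

lemma card_block_succ_shift: "card (block_succ (s + int r)) = card (block_succ s)"
  by (rule bij_betw_same_card[of "\<lambda>t. t - int r"],
      rule bij_betw_byWitness[where f' = "\<lambda>t. t + int r"]) (auto simp: block_succ_shift)

lemma block_pairs_eq_Sigma: "block_pairs = Sigma {1..int r} block_succ"
  unfolding block_pairs_def block_succ_def using Rblock_index_range by fastforce

lemma finite_block_pairs: "finite block_pairs"
  unfolding block_pairs_eq_Sigma by (simp add: finite_block_succ)

lemma card_Sigma_aff_sym_image: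
  assumes "d \<in> aff_sym r"
  shows "card (Sigma (d ` {1..int r}) block_succ) = card block_pairs"
proof -
  have "card (Sigma (d ` {1..int r}) block_succ) = (\<Sum>s\<in>d ` {1..int r}. card (block_succ s))"
    using finite_block_succ by simp
  also have "\<dots> = (\<Sum>s\<in>{1..int r}. card (block_succ s))"
    by (rule sum_aff_sym_image[OF r_pos assms]) (rule card_block_succ_shift)
  also have "\<dots> = card block_pairs"
    unfolding block_pairs_eq_Sigma using finite_block_succ by simp
  finally show ?thesis .
qed

lemma young_sub_aff_sym: "w \<in> young_sub lam n r \<Longrightarrow> w \<in> aff_sym r"
  unfolding young_sub_def by blast

lemma young_sub_Rblock: "w \<in> young_sub lam n r \<Longrightarrow> k \<in> {1..int n} \<Longrightarrow> p \<in> Rb k \<Longrightarrow> w p \<in> Rb k"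
  unfolding young_sub_def by blast

lemma young_sub_range:
  assumes "w \<in> young_sub lam n r" "p \<in> {1..int r}"
  shows "w p \<in> {1..int r}"
proof -
  obtain k where "k \<in> {1..int n}" "p \<in> Rb k" using Rblock_cover[OF assms(2)] .
  then show ?thesis using young_sub_Rblock[OF assms(1)] Rblock_subset by blast
qed

lemma inversions_young_sub_same_block:
  assumes w: "w \<in> young_sub lam n r" and ab: "(a, b) \<in> inversions r w"
  shows "\<exists>k\<in>{1..int n}. a \<in> Rb k \<and> b \<in> Rb k"
proof -
  have inv: "1 \<le> a" "a < b" "b \<le> int r" "w b < w a" using ab unfolding inversions_def by auto
  obtain k where k: "k \<in> {1..int n}" "a \<in> Rb k" using Rblock_cover[of a] inv by auto
  obtain k' where k': "k' \<in> {1..int n}" "b \<in> Rb k'" using Rblock_cover[of b] inv by auto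
  have "k = k'"
  proof (cases k k' rule: linorder_cases)
    case less
    then show ?thesis
      using Rblock_less[OF k(1) k'(1) less young_sub_Rblock[OF w k] young_sub_Rblock[OF w k']] inv
      by simp
  next
    case greater
    then show ?thesis using Rblock_less[OF k'(1) k(1) greater k'(2) k(2)] inv by simp
  qed
  with k k' show ?thesis by blast
qed

lemma inversions_young_sub_subset: "w \<in> young_sub lam n r \<Longrightarrow> inversions r w \<subseteq> block_pairs"
  using inversions_young_sub_same_block unfolding block_pairs_def inversions_def by fastforce

lemma young_sub_comp_sref:
  assumes w: "w \<in> young_sub lam n r"
    and k: "k \<in> {1..int n}" "p \<in> Rb k" "p + 1 \<in> Rb k"
  shows "w \<circ> sref r (nat p) \<in> young_sub lam n r"
proof -
  define \<sigma> where "\<sigma> = sref r (nat p)"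
  have p: "1 \<le> p" "p + 1 \<le> int r" using Rblock_subset[OF k(1)] k(2,3) by auto
  have \<sigma>\<sigma>: "\<sigma> (\<sigma> y) = y" for y unfolding \<sigma>_def using p by (intro sref_sref) simp
  have \<sigma>_block: "\<sigma> ` Rb k' \<subseteq> Rb k'" if k': "k' \<in> {1..int n}" for k'
  proof
    fix z assume "z \<in> \<sigma> ` Rb k'"
    then obtain y where y: "y \<in> Rb k'" "z = \<sigma> y" by blast
    then have \<sigma>y: "\<sigma> y = (if y = p + 1 then p else if y = p then p + 1 else y)"
      unfolding \<sigma>_def using sref_on_range[OF p] Rblock_subset[OF k'] by blast
    show "z \<in> Rb k'"
    proof (cases "y = p \<or> y = p + 1")
      case True
      then have "k' = k" using Rblock_unique[OF k' k(1)] y(1) k(2,3) by blast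
      with True show ?thesis using \<sigma>y y(2) k(2,3) by auto
    next
      case False
      then show ?thesis using \<sigma>y y by simp
    qed
  qed
  have "\<sigma> \<in> aff_sym r" unfolding \<sigma>_def using r_pos by (rule aff_sym_sref)
  then have "w \<circ> \<sigma> \<in> aff_sym r" using aff_sym_comp young_sub_aff_sym[OF w] by blast
  moreover have "(w \<circ> \<sigma>) ` Rb k' = Rb k'" if "k' \<in> {1..int n}" for k'
  proof -
    have "(w \<circ> \<sigma>) ` Rb k' = w ` (\<sigma> ` Rb k')" by (simp add: image_comp)
    also have "\<dots> = w ` Rb k'" using involution_image_eq[OF \<sigma>\<sigma> \<sigma>_block[OF that]] by simp
    also have "\<dots> = Rb k'" using w that unfolding young_sub_def by blast
    finally show ?thesis .
  qed
  ultimately show ?thesis unfolding young_sub_def \<sigma>_def by blast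
qed

lemma young_sub_eq_id:
  assumes w: "w \<in> young_sub lam n r"
    and ascent: "\<And>p. 1 \<le> p \<Longrightarrow> p + 1 \<le> int r \<Longrightarrow> w p < w (p + 1)"
  shows "w = id"
proof (rule shift_equivariant_eqI[OF r_pos])
  show "shift_equivariant r w" using young_sub_aff_sym[OF w] by (simp add: aff_sym_iff)
  show "shift_equivariant r id" by (rule shift_equivariant_id)
  fix y assume y: "y \<in> {1..int r}"
  have "w 1 + (y - 1) \<le> w y" "w y + (int r - y) \<le> w (int r)"
    using int_increasing_steps[of 1 "int r" w] ascent y by auto
  moreover have "1 \<le> w 1" "w (int r) \<le> int r" using young_sub_range[OF w] r_pos by auto
  ultimately show "w y = id y" by simp
qed

text \<open>Bubble sort inside the blocks: a descent of w at p lies within one block, and removing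
  it by s_p stays in the Young subgroup and loses one inversion.\<close>
lemma young_sub_sref_word:
  assumes "w \<in> young_sub lam n r"
  shows "\<exists>is. length is \<le> card (inversions r w) \<and> set is \<subseteq> {1..r} \<and> w = sref_word r is"
  using assms
proof (induction "card (inversions r w)" arbitrary: w rule: less_induct)
  case less
  show ?case
  proof (cases "\<exists>p. 1 \<le> p \<and> p + 1 \<le> int r \<and> w (p + 1) < w p")
    case False
    have "inj w" using young_sub_aff_sym[OF less.prems] by (simp add: aff_sym_iff bij_is_inj)
    have "w p < w (p + 1)" if "1 \<le> p" "p + 1 \<le> int r" for p
    proof -
      have "w (p + 1) \<noteq> w p" using \<open>inj w\<close> by (simp add: inj_eq)
      moreover have "\<not> w (p + 1) < w p" using False that by blast
      ultimately show ?thesis by simp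
    qed
    then have "w = id" by (rule young_sub_eq_id[OF less.prems])
    then show ?thesis by (intro exI[of _ "[]"]) simp
  next
    case True
    then obtain p where p: "1 \<le> p" "p + 1 \<le> int r" "w (p + 1) < w p" by blast
    define \<sigma> where "\<sigma> = sref r (nat p)"
    have "(p, p + 1) \<in> inversions r w" using p unfolding inversions_def by simp
    then obtain k where "k \<in> {1..int n}" "p \<in> Rb k" "p + 1 \<in> Rb k"
      using inversions_young_sub_same_block[OF less.prems] by blast
    then have young: "w \<circ> \<sigma> \<in> young_sub lam n r"
      unfolding \<sigma>_def by (rule young_sub_comp_sref[OF less.prems])
    have fewer: "card (inversions r (w \<circ> \<sigma>)) < card (inversions r w)"
      unfolding \<sigma>_def using card_inversions_comp_sref[OF p] by simp
    obtain "is" where "is": "length is \<le> card (inversions r (w \<circ> \<sigma>))" "set is \<subseteq> {1..r}"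
      "w \<circ> \<sigma> = sref_word r is"
      using less.hyps[OF fewer young] by blast
    have "w = (w \<circ> \<sigma>) \<circ> \<sigma>"
      unfolding \<sigma>_def using sref_sref p by (simp add: fun_eq_iff)
    also have "\<dots> = sref_word r is \<circ> \<sigma>" unfolding "is"(3) ..
    also have "\<dots> = sref_word r (is @ [nat p])" unfolding \<sigma>_def sref_word_snoc ..
    finally show ?thesis using "is"(1,2) fewer p by (intro exI[of _ "is @ [nat p]"]) auto
  qed
qed

definition block_index :: "int \<Rightarrow> int" where
  "block_index p = (THE k. k \<in> {1..int n} \<and> p \<in> Rb k)"

lemma block_index_eq: "k \<in> {1..int n} \<Longrightarrow> p \<in> Rb k \<Longrightarrow> block_index p = k"
  unfolding block_index_def by (rule the_equality) (auto intro: Rblock_unique)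

definition block_flip :: "int \<Rightarrow> int" where
  "block_flip p = psum lam (block_index p - 1) + psum lam (block_index p) + 1 - p"

lemma block_flip_Rblock:
  assumes "k \<in> {1..int n}" "p \<in> Rb k"
  shows "block_flip p \<in> Rb k" and "block_flip (block_flip p) = p"
proof -
  have flip: "block_flip p = psum lam (k - 1) + psum lam k + 1 - p"
    unfolding block_flip_def block_index_eq[OF assms] ..
  show in_block: "block_flip p \<in> Rb k" using assms(2) unfolding flip Rblock_eq[OF assms(1)] by auto
  have "block_flip (block_flip p) = psum lam (k - 1) + psum lam k + 1 - block_flip p"
    unfolding block_flip_def[of "block_flip p"] block_index_eq[OF assms(1) in_block] ..
  then show "block_flip (block_flip p) = p" unfolding flip by simp
qed

lemma block_flip_less:
  "k \<in> {1..int n} \<Longrightarrow> p \<in> Rb k \<Longrightarrow> q \<in> Rb k \<Longrightarrow> p < q \<Longrightarrow> block_flip q < block_flip p"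
  unfolding block_flip_def by (simp add: block_index_eq)

text \<open>The longest element w_{0,\<lambda>} reverses every block; off [1, r] it is extended periodically.\<close>
definition w0 :: "int \<Rightarrow> int" where
  "w0 x = (x - 1) div int r * int r + block_flip ((x - 1) mod int r + 1)"

lemma w0_on_range: "x \<in> {1..int r} \<Longrightarrow> w0 x = block_flip x"
  unfolding w0_def by simp

lemma shift_equivariant_w0: "shift_equivariant r w0"
proof -
  have r: "int r \<noteq> 0" using r_pos by simp
  show ?thesis unfolding shift_equivariant_def w0_def add_self_minus_1_div_mod[OF r]
    by (simp add: algebra_simps)
qed

lemma block_flip_range:
  assumes "p \<in> {1..int r}"
  shows "block_flip p \<in> {1..int r}" and "block_flip (block_flip p) = p"
proof -
  obtain k where k: "k \<in> {1..int n}" "p \<in> Rb k" using Rblock_cover[OF assms] .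
  then show "block_flip p \<in> {1..int r}" using block_flip_Rblock(1) Rblock_subset by blast
  show "block_flip (block_flip p) = p" using block_flip_Rblock(2)[OF k] .
qed

lemma w0_w0: "w0 (w0 x) = x"
proof -
  have "w0 \<circ> w0 = id"
  proof (rule shift_equivariant_eqI[OF r_pos])
    show "shift_equivariant r (w0 \<circ> w0)" by (intro shift_equivariant_comp shift_equivariant_w0)
    show "shift_equivariant r id" by (rule shift_equivariant_id)
    show "(w0 \<circ> w0) x = id x" if "x \<in> {1..int r}" for x
      using block_flip_range[OF that] w0_on_range that by simp
  qed
  then show ?thesis by (simp add: fun_eq_iff)
qed

lemma w0_young_sub: "w0 \<in> young_sub lam n r"
proof -
  have "bij w0" by (rule involuntory_imp_bij) (rule w0_w0)
  moreover have "w0 ` Rb k = Rb k" if k: "k \<in> {1..int n}" for k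
  proof (rule involution_image_eq[OF w0_w0])
    show "w0 ` Rb k \<subseteq> Rb k"
      using Rblock_subset[OF k] w0_on_range block_flip_Rblock(1)[OF k] by auto
  qed
  moreover have "shift_equivariant r w0" by (rule shift_equivariant_w0)
  ultimately show ?thesis unfolding young_sub_def aff_sym_iff by blast
qed

lemma inversions_w0: "inversions r w0 = block_pairs"
proof
  show "inversions r w0 \<subseteq> block_pairs" by (rule inversions_young_sub_subset[OF w0_young_sub])
  show "block_pairs \<subseteq> inversions r w0"
  proof
    fix x assume "x \<in> block_pairs"
    then obtain s t k where x: "x = (s, t)" "s < t" "k \<in> {1..int n}" "s \<in> Rb k" "t \<in> Rb k"
      unfolding block_pairs_def by blast
    then have "s \<in> {1..int r}" "t \<in> {1..int r}" using Rblock_subset by blast+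
    then show "x \<in> inversions r w0"
      using block_flip_less[OF x(3-5,2)] w0_on_range x unfolding inversions_def by auto
  qed
qed

lemma aff_len_longest_young: "aff_len r (longest_young lam n r) = card block_pairs"
proof -
  have upper: "aff_len r v \<le> card block_pairs" if v: "v \<in> young_sub lam n r" for v
  proof -
    obtain "is" where "is": "length is \<le> card (inversions r v)" "set is \<subseteq> {1..r}"
      "v = sref_word r is" using young_sub_sref_word[OF v] by blast
    have "aff_len r v \<le> length is" using aff_len_le_length[OF "is"(2), where a = 0] "is"(3) by simp
    also have "\<dots> \<le> card (inversions r v)" by (rule "is"(1))
    also have "\<dots> \<le> card block_pairs"
      by (rule card_mono[OF finite_block_pairs inversions_young_sub_subset[OF v]])
    finally show ?thesis .
  qed
  have lower: "card block_pairs \<le> aff_len r w0"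
  proof -
    obtain "is" where "is": "set is \<subseteq> {1..r}" "w0 = sref_word r is"
      using young_sub_sref_word[OF w0_young_sub] by blast
    have "card (inversions r w0) \<le> aff_len r w0"
      using card_inversions_le_aff_len[OF r_pos "is"(1), where a = 0] "is"(2) by simp
    then show ?thesis unfolding inversions_w0 .
  qed
  let ?longest =
    "\<lambda>w. w \<in> young_sub lam n r \<and> (\<forall>v \<in> young_sub lam n r. aff_len r v \<le> aff_len r w)"
  have "?longest w0" using w0_young_sub upper lower order_trans by blast
  then have "?longest (longest_young lam n r)"
    unfolding longest_young_def by (rule someI[of ?longest])
  then show ?thesis using upper lower w0_young_sub by (meson antisym order_trans)
qed

end

theorem lemma3p10p1:
  fixes n r :: nat and lam :: "int \<Rightarrow> nat" and d :: "int \<Rightarrow> int"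
  assumes "n \<ge> 1" and "r \<ge> 1"
    and "lam \<in> Lam_aff n r"
    and "d \<in> dist_reps lam n r"
  defines "Y \<equiv> {(s, t). 1 \<le> inv d s \<and> inv d s \<le> int r \<and> s < t \<and>
                   (\<exists>k. s \<in> Rblock lam n r k \<and> t \<in> Rblock lam n r k)}"
    and "Z \<equiv> {(s, t). 1 \<le> s \<and> s \<le> int r \<and> s < t \<and>
                   (\<exists>k\<in>{1..int n}. s \<in> Rblock lam n r k \<and> t \<in> Rblock lam n r k)}"
  shows "finite Y \<and> finite Z \<and> card Y = card Z \<and>
         card Z = aff_len r (longest_young lam n r)"
proof -
  interpret composition n r lam using assms(1-3) by unfold_locales
  have d: "d \<in> aff_sym r" using assms(4) unfolding dist_reps_def by blast
  then have "bij d" by (simp add: aff_sym_iff)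
  have Y: "Y = Sigma (d ` {1..int r}) block_succ"
    unfolding Y_def block_succ_def using bij_inv_mem_iff[OF \<open>bij d\<close>, of _ "{1..int r}"] by auto
  have Z: "Z = block_pairs" unfolding Z_def block_pairs_def ..
  show ?thesis
    unfolding Y Z using finite_block_succ finite_block_pairs card_Sigma_aff_sym_image[OF d]
      aff_len_longest_young by simp
qed

end
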